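(* For every $t\in\mathbb{N}$, every choice of points $\mathbf{x}_1,\dots,\mathbf{x}_t\in C$ and every $\mathbf{x}\in C$, $$\sigma_t(\mathbf{x})\ge\sigma\,\|\mathbf{h}_t(\mathbf{x})\|,\qquad \mathbf{h}_t(\mathbf{x})=(\mathbf{K}_t+\sigma^2\mathbf{I})^{-1}\mathbf{k}_t(\mathbf{x}).$$
   Context: Let $C\subseteq\mathbb{R}^d$ and let $k$ be a positive semidefinite kernel with $k(\mathbf{x},\mathbf{x}')\le1$ and $k(\mathbf{x},\mathbf{x})=1$ for all $\mathbf{x},\mathbf{x}'\in C$. Let $\sigma>0$. Given $\mathbf{x}_1,\dots,\mathbf{x}_t$, $\mathbf{K}_t=[k(\mathbf{x}_i,\mathbf{x}_j)]_{i,j\le t}$, $\mathbf{k}_t(\mathbf{x})=[k(\mathbf{x}_1,\mathbf{x}),\dots,k(\mathbf{x}_t,\mathbf{x})]^T$, and $\sigma_t^2(\mathbf{x})=k(\mathbf{x},\mathbf{x})-\mathbf{k}_t(\mathbf{x})^T(\mathbf{K}_t+\sigma^2\mathbf{I})^{-1}\mathbf{k}_t(\mathbf{x})$ with $\sigma_t(\mathbf{x})\ge0$. $\|\cdot\|$ is the Euclidean norm. *)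

theory Defs
  imports "HOL-Analysis.Analysis"
begin

definition psd_kernel_on :: "'a set \<Rightarrow> ('a \<Rightarrow> 'a \<Rightarrow> real) \<Rightarrow> bool" where
  "psd_kernel_on C k \<longleftrightarrow>
     (\<forall>x\<in>C. \<forall>y\<in>C. k x y = k y x) \<and>
     (\<forall>(n::nat) (xs::nat \<Rightarrow> 'a) (c::nat \<Rightarrow> real). (\<forall>i<n. xs i \<in> C) \<longrightarrow>
        0 \<le> (\<Sum>i<n. \<Sum>j<n. c i * c j * k (xs i) (xs j)))"

text \<open>Gram matrix K_t of the points X i (index type 't has t elements).\<close>
definition gram_mat :: "('a \<Rightarrow> 'a \<Rightarrow> real) \<Rightarrow> ('t::finite \<Rightarrow> 'a) \<Rightarrow> real^'t^'t" where
  "gram_mat k X = (\<chi> i j. k (X i) (X j))"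

definition kvec :: "('a \<Rightarrow> 'a \<Rightarrow> real) \<Rightarrow> ('t::finite \<Rightarrow> 'a) \<Rightarrow> 'a \<Rightarrow> real^'t" where
  "kvec k X x = (\<chi> i. k (X i) x)"

definition reg_inv :: "('a \<Rightarrow> 'a \<Rightarrow> real) \<Rightarrow> real \<Rightarrow> ('t::finite \<Rightarrow> 'a) \<Rightarrow> real^'t^'t" where
  "reg_inv k s X = matrix_inv (gram_mat k X + (s\<^sup>2) *\<^sub>R mat 1)"

definition hvec :: "('a \<Rightarrow> 'a \<Rightarrow> real) \<Rightarrow> real \<Rightarrow> ('t::finite \<Rightarrow> 'a) \<Rightarrow> 'a \<Rightarrow> real^'t" where
  "hvec k s X x = reg_inv k s X *v kvec k X x"

definition post_var :: "('a \<Rightarrow> 'a \<Rightarrow> real) \<Rightarrow> real \<Rightarrow> ('t::finite \<Rightarrow> 'a) \<Rightarrow> 'a \<Rightarrow> real" where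
  "post_var k s X x = k x x - kvec k X x \<bullet> (reg_inv k s X *v kvec k X x)"

definition post_sd :: "('a \<Rightarrow> 'a \<Rightarrow> real) \<Rightarrow> real \<Rightarrow> ('t::finite \<Rightarrow> 'a) \<Rightarrow> 'a \<Rightarrow> real" where
  "post_sd k s X x = sqrt (post_var k s X x)"

end

theory Submission
  imports Defs
begin

text \<open>Write \<open>A = K\<^sub>t + \<sigma>\<^sup>2 I\<close>, so that \<open>A h = k\<^sub>t(x)\<close> and hence
  \<open>k\<^sub>t(x)\<^sup>T h = h\<^sup>T K\<^sub>t h + \<sigma>\<^sup>2 \<parallel>h\<parallel>\<^sup>2\<close>. Positive semidefiniteness of the Gram matrix of the
  points \<open>x, x\<^sub>1, \<dots>, x\<^sub>t\<close>, tested against the vector \<open>(-1, h)\<close>, gives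
  \<open>k(x,x) - 2 k\<^sub>t(x)\<^sup>T h + h\<^sup>T K\<^sub>t h \<ge> 0\<close>. Therefore
  \<open>\<sigma>\<^sub>t\<^sup>2(x) = k(x,x) - k\<^sub>t(x)\<^sup>T h \<ge> k\<^sub>t(x)\<^sup>T h - h\<^sup>T K\<^sub>t h = \<sigma>\<^sup>2 \<parallel>h\<parallel>\<^sup>2\<close>.\<close>

lemma psd_kernel_on_sum_nonneg:
  assumes "psd_kernel_on C k" "finite I" "\<And>i. i \<in> I \<Longrightarrow> Y i \<in> C"
  shows "0 \<le> (\<Sum>i\<in>I. \<Sum>j\<in>I. c i * c j * k (Y i) (Y j))"
proof -
  obtain g where g: "bij_betw g {..<card I} I"
    using ex_bij_betw_nat_finite[OF assms(2)] by (auto simp: atLeast0LessThan)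
  have "\<forall>i<card I. (Y \<circ> g) i \<in> C"
    using assms(3) bij_betwE[OF g] by auto
  then have "0 \<le> (\<Sum>i<card I. \<Sum>j<card I. (c \<circ> g) i * (c \<circ> g) j * k ((Y \<circ> g) i) ((Y \<circ> g) j))"
    using assms(1) unfolding psd_kernel_on_def by blast
  also have "\<dots> = (\<Sum>i\<in>I. \<Sum>j\<in>I. c i * c j * k (Y i) (Y j))"
    by (simp add: sum.reindex_bij_betw[OF g, symmetric])
  finally show ?thesis .
qed

lemma inner_gram_mat:
  fixes X :: "'t::finite \<Rightarrow> 'a"
  shows "v \<bullet> (gram_mat k X *v v) = (\<Sum>i\<in>UNIV. \<Sum>j\<in>UNIV. v$i * v$j * k (X i) (X j))"
  by (simp add: inner_vec_def matrix_vector_mult_def gram_mat_def sum_distrib_left algebra_simps)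

lemma gram_mat_psd:
  assumes "psd_kernel_on C k" "\<forall>i. X i \<in> C"
  shows "0 \<le> v \<bullet> (gram_mat k X *v v)"
  unfolding inner_gram_mat using psd_kernel_on_sum_nonneg[OF assms(1), of UNIV X "\<lambda>i. v$i"] assms(2)
  by simp

lemma invertible_psd_add_scaled_identity:
  fixes A :: "real^'n::finite^'n"
  assumes psd: "\<And>v. 0 \<le> v \<bullet> (A *v v)" and "s > 0"
  shows "invertible (A + s *\<^sub>R mat 1)"
proof -
  have "v = 0" if "(A + s *\<^sub>R mat 1) *v v = 0" for v
  proof -
    have "0 = v \<bullet> (A *v v) + s * (v \<bullet> v)"
      using arg_cong[OF that, of "inner v"]
      by (simp add: algebra_simps flip: scaleR_matrix_vector_assoc)
    then have "s * (v \<bullet> v) \<le> 0"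
      using psd[of v] by linarith
    then have "v \<bullet> v \<le> 0"
      using \<open>s > 0\<close> by (simp add: mult_le_0_iff)
    then show "v = 0" by (metis inner_eq_zero_iff inner_ge_zero order_antisym)
  qed
  then show ?thesis
    using matrix_left_invertible_ker invertible_left_inverse by blast
qed

lemma matrix_mul_matrix_inv:
  fixes A :: "'a::semiring_1^'n^'m"
  assumes "invertible A"
  shows "A ** matrix_inv A = mat 1"
  using someI_ex[OF assms[unfolded invertible_def]] unfolding matrix_inv_def by blast

lemma gram_mat_reg_mult_hvec:
  assumes "psd_kernel_on C k" "\<forall>i. X i \<in> C" "\<sigma> \<noteq> 0"
  shows "(gram_mat k X + \<sigma>\<^sup>2 *\<^sub>R mat 1) *v hvec k \<sigma> X x = kvec k X x"
proof -
  have "invertible (gram_mat k X + \<sigma>\<^sup>2 *\<^sub>R mat 1)"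
    using invertible_psd_add_scaled_identity[OF gram_mat_psd[OF assms(1,2)]] assms(3) by simp
  then show ?thesis
    by (simp add: hvec_def reg_inv_def matrix_vector_mul_assoc matrix_mul_matrix_inv)
qed

text \<open>The Gram matrix of \<open>x, X\<^sub>1, \<dots>, X\<^sub>t\<close> (indexed by \<open>'t option\<close>, with \<open>None\<close> for \<open>x\<close>)
  evaluated at the vector \<open>(-1, v)\<close>.\<close>

lemma psd_kernel_on_augmented_form_nonneg:
  fixes X :: "'t::finite \<Rightarrow> 'a"
  assumes psd: "psd_kernel_on C k" and "\<forall>i. X i \<in> C" "x \<in> C"
  shows "0 \<le> k x x - 2 * (kvec k X x \<bullet> v) + v \<bullet> (gram_mat k X *v v)"
proof -
  define Y where "Y = case_option x X"
  define c where "c = case_option (-1) (\<lambda>i. v $ i)"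
  have sym: "k x (X i) = k (X i) x" for i
    using psd assms(2,3) unfolding psd_kernel_on_def by blast
  have kvec_inner: "kvec k X x \<bullet> v = (\<Sum>i\<in>UNIV. v$i * k (X i) x)"
    by (simp add: kvec_def inner_vec_def mult.commute)
  have "0 \<le> (\<Sum>i\<in>UNIV. \<Sum>j\<in>UNIV. c i * c j * k (Y i) (Y j))"
    using psd_kernel_on_sum_nonneg[OF psd, of "UNIV :: 't option set" Y c] assms(2,3)
    by (simp add: Y_def split: option.split)
  also have "\<dots> = k x x - 2 * (kvec k X x \<bullet> v) + v \<bullet> (gram_mat k X *v v)"
    by (simp add: UNIV_option_conv sum.reindex c_def Y_def inner_gram_mat kvec_inner sym
        sum.distrib sum_subtractf sum_negf algebra_simps)
  finally show ?thesis .
qed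

lemma post_var_lower_bound:
  assumes "psd_kernel_on C k" "\<forall>i. X i \<in> C" "x \<in> C" "\<sigma> \<noteq> 0"
  shows "(\<sigma> * norm (hvec k \<sigma> X x))\<^sup>2 \<le> post_var k \<sigma> X x"
proof -
  let ?G = "gram_mat k X" and ?h = "hvec k \<sigma> X x" and ?kv = "kvec k X x"
  have "?kv \<bullet> ?h = ?h \<bullet> ((?G + \<sigma>\<^sup>2 *\<^sub>R mat 1) *v ?h)"
    by (simp add: gram_mat_reg_mult_hvec[OF assms(1,2,4)] inner_commute)
  also have "\<dots> = ?h \<bullet> (?G *v ?h) + (\<sigma> * norm ?h)\<^sup>2"
    by (simp add: algebra_simps power_mult_distrib power2_norm_eq_inner
        flip: scaleR_matrix_vector_assoc)
  finally have "?kv \<bullet> ?h = ?h \<bullet> (?G *v ?h) + (\<sigma> * norm ?h)\<^sup>2" .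
  moreover have "post_var k \<sigma> X x = k x x - ?kv \<bullet> ?h"
    by (simp add: post_var_def hvec_def)
  ultimately show ?thesis
    using psd_kernel_on_augmented_form_nonneg[OF assms(1-3), of ?h] by linarith
qed

theorem mainTheorem15:
  fixes C :: "'a::euclidean_space set" and k :: "'a \<Rightarrow> 'a \<Rightarrow> real" and \<sigma> :: real
    and X :: "'t::finite \<Rightarrow> 'a" and x :: 'a
  assumes "psd_kernel_on C k"
    and "\<forall>y\<in>C. \<forall>z\<in>C. k y z \<le> 1"
    and "\<forall>y\<in>C. k y y = 1"
    and "\<sigma> > 0"
    and "\<forall>i. X i \<in> C"
    and "x \<in> C"
  shows "post_sd k \<sigma> X x \<ge> \<sigma> * norm (hvec k \<sigma> X x)"
proof -
  have "(\<sigma> * norm (hvec k \<sigma> X x))\<^sup>2 \<le> post_var k \<sigma> X x"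
    using post_var_lower_bound[OF assms(1,5,6)] assms(4) by simp
  then have "sqrt ((\<sigma> * norm (hvec k \<sigma> X x))\<^sup>2) \<le> post_sd k \<sigma> X x"
    unfolding post_sd_def by (rule real_sqrt_le_mono)
  then show ?thesis
    using assms(4) by simp
qed

end
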